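(* Let $\left(\mathbb{V}_{\mathbb{Z}},E,Q\right)$ be a polarized variation of Hodge structures of weight one and rank $2g$ over an open disk $B\subseteq\mathbb{C}$ with coordinate $t$, and write $\nabla^{GM}_t$ for the Gauß–Manin derivative in the direction $\partial/\partial t$. Let $\alpha\in\Gamma\left(B,E\right)$ be a holomorphic section. Then $$\alpha\in\Gamma\left(\mathcal{U}\right)\iff \alpha,\ \nabla^{GM}_t\alpha,\ \left(\nabla^{GM}_t\right)^2\alpha,\ \ldots,\ \left(\nabla^{GM}_t\right)^{g-1}\alpha\in\Gamma\left(\mathcal{K}\right),$$ equivalently $\alpha\in\Gamma(\mathcal{U})$ if and only if $\theta\left(\left(\nabla^{GM}_t\right)^j\alpha\right)=0$ for all $j=0,1,\ldots,g-1$.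
   Context: A PVHS of weight one and rank $2g$ on a complex manifold $B$ consists of: a local system $\mathbb{V}_{\mathbb{Z}}$ of free abelian groups of rank $2g$; a polarization $Q\colon\mathbb{V}_{\mathbb{Z}}\otimes\mathbb{V}_{\mathbb{Z}}\to\mathbb{Z}$ (non-degenerate, antisymmetric, unimodular); and a holomorphic subbundle $E\subseteq\mathcal{H}:=\mathbb{V}_{\mathbb{Z}}\otimes_{\mathbb{Z}}\mathcal{O}_B$ of rank $g$ on which the Hodge form $h(u,v)=iQ_{\mathbb{C}}(u,\overline{v})$ is positive definite. Then $E^{\perp}=\overline{E}$, $\mathcal{H}/E\cong E^{\vee}$ holomorphically, and there is a holomorphic exact sequence $0\to E\xrightarrow{\iota_1}\mathcal{H}\xrightarrow{\pi_2}E^{\vee}\to 0$ together with a $C^\infty$ orthogonal splitting $\mathcal{H}=E\oplus E^{\vee}$ given by smooth maps $\iota_2\colon E^\vee\to\mathcal{H}$, $\pi_1\colon\mathcal{H}\to E$ with $\pi_1\iota_1=\mathrm{id}$, $\pi_2\iota_2=\mathrm{id}$, $\iota_1\pi_1+\iota_2\pi_2=\mathrm{id}$. $\nabla^{GM}$ is the flat (Gauß–Manin) connection on $\mathcal{H}$ whose flat sections are $\mathbb{V}_{\mathbb{C}}=\mathbb{V}_{\mathbb{Z}}\otimes\mathbb{C}$. The Higgs field is $\theta:=\pi_2\circ\nabla^{GM}\circ\iota_1\colon E\to E^{\vee}\otimes\Omega^1_B$ (an $\mathcal{O}_B$-linear map). The flat unitary local system is $\mathbb{U}:=\ker\left(\nabla^{GM}\circ\iota_1\right)\subseteq\mathbb{V}_{\mathbb{C}}$,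 the flat unitary subbundle is $\mathcal{U}:=\mathbb{U}\otimes_{\mathbb{C}}\mathcal{O}_B\subseteq E$, and the kernel sheaf is $\mathcal{K}:=\ker\theta\subseteq E$. *)

theory Defs
  imports "HOL-Analysis.Analysis"
begin

text \<open>Over an open disk B the local system V_Z is trivial: V_Z = Z^(2g) (index type 'n with
  CARD('n) = 2g), the polarization is a constant integer matrix Q, the bundle H is the trivial
  bundle B x C^(2g), and the Gauss-Manin derivative in direction d/dt is componentwise d/dt.\<close>

definition nablat :: "(complex \<Rightarrow> complex^'n) \<Rightarrow> complex \<Rightarrow> complex^'n" where
  "nablat \<alpha> = (\<lambda>t. \<chi> i. deriv (\<lambda>s. \<alpha> s $ i) t)"

definition Qc :: "int^'n^'n \<Rightarrow> complex^'n \<Rightarrow> complex^'n \<Rightarrow> complex" where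
  "Qc Q u v = (\<Sum>i\<in>UNIV. \<Sum>j\<in>UNIV. u $ i * of_int (Q $ i $ j) * v $ j)"

definition hodge :: "int^'n^'n \<Rightarrow> complex^'n \<Rightarrow> complex^'n \<Rightarrow> complex" where
  "hodge Q u v = \<i> * Qc Q u (\<chi> i. cnj (v $ i))"

definition vec_holomorphic :: "complex set \<Rightarrow> (complex \<Rightarrow> complex^'n) \<Rightarrow> bool" where
  "vec_holomorphic W \<alpha> = (\<forall>i. (\<lambda>t. \<alpha> t $ i) holomorphic_on W)"

definition holo_subbundle :: "complex set \<Rightarrow> nat \<Rightarrow> (complex \<Rightarrow> (complex^'n) set) \<Rightarrow> bool" where
  "holo_subbundle B g E =
     ((\<forall>t\<in>B. vec.subspace (E t) \<and> vec.dim (E t) = g) \<and>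
      (\<forall>t0\<in>B. \<exists>W e. open W \<and> t0 \<in> W \<and> W \<subseteq> B \<and> (\<forall>k<g. vec_holomorphic W (e k)) \<and>
                     (\<forall>t\<in>W. E t = vec.span {e k t | k. k < g})))"

definition pvhs_wt1 :: "complex set \<Rightarrow> nat \<Rightarrow> int^'n^'n \<Rightarrow> (complex \<Rightarrow> (complex^'n) set) \<Rightarrow> bool" where
  "pvhs_wt1 B g Q E =
     (open B \<and> CARD('n) = 2 * g \<and>
      transpose Q = - Q \<and> (det Q = 1 \<or> det Q = -1) \<and>
      holo_subbundle B g E \<and>
      (\<forall>t\<in>B. \<forall>u\<in>E t. \<forall>v\<in>E t. Qc Q u v = 0) \<and>
      (\<forall>t\<in>B. \<forall>u\<in>E t. u \<noteq> 0 \<longrightarrow> Im (hodge Q u u) = 0 \<and> Re (hodge Q u u) > 0))"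

definition hol_section :: "complex set \<Rightarrow> (complex \<Rightarrow> (complex^'n) set) \<Rightarrow> (complex \<Rightarrow> complex^'n) \<Rightarrow> bool" where
  "hol_section B E \<alpha> = (vec_holomorphic B \<alpha> \<and> (\<forall>t\<in>B. \<alpha> t \<in> E t))"

text \<open>Higgs field theta = pi_2 o nabla o iota_1 with pi_2 : H \<rightarrow> H/E (= E dual); the value at t
  is the class of nabla_t beta (t) modulo E t; the zero class is E t itself.\<close>
definition higgs :: "(complex \<Rightarrow> (complex^'n) set) \<Rightarrow> (complex \<Rightarrow> complex^'n) \<Rightarrow> complex \<Rightarrow> (complex^'n) set" where
  "higgs E \<beta> t = {nablat \<beta> t + w | w. w \<in> E t}"

definition Gamma_K :: "complex set \<Rightarrow> (complex \<Rightarrow> (complex^'n) set) \<Rightarrow> (complex \<Rightarrow> complex^'n) \<Rightarrow> bool" where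
  "Gamma_K B E \<beta> = (hol_section B E \<beta> \<and> (\<forall>t\<in>B. higgs E \<beta> t = E t))"

text \<open>Flat unitary local system U = ker(nabla o iota_1) in V_C: over the disk, flat sections of
  V_C are constant vectors; those lying in E.\<close>
definition unitary_flat :: "complex set \<Rightarrow> (complex \<Rightarrow> (complex^'n) set) \<Rightarrow> (complex^'n) set" where
  "unitary_flat B E = {v. \<forall>t\<in>B. v \<in> E t}"

definition Gamma_U :: "complex set \<Rightarrow> (complex \<Rightarrow> (complex^'n) set) \<Rightarrow> (complex \<Rightarrow> complex^'n) \<Rightarrow> bool" where
  "Gamma_U B E \<alpha> = (\<exists>(k::nat) u f. (\<forall>i<k. u i \<in> unitary_flat B E \<and> f i holomorphic_on B) \<and>
                        (\<forall>t\<in>B. \<alpha> t = (\<Sum>i<k. f i t *s u i)))"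

end

theory Submission
  imports Defs "HOL-Complex_Analysis.Cauchy_Integral_Formula"
begin

text \<open>A section of \<open>\<U> \<otimes> \<O>\<^sub>B\<close> is a holomorphic map into the constant subspace \<open>\<U>\<close>
  of every fibre of \<open>E\<close>, and differentiating keeps it there, so all its derivatives lie in \<open>\<K>\<close>.
  Conversely, suppose \<open>\<alpha>, \<nabla>\<alpha>, \<dots>, \<nabla>\<^sup>g\<alpha>\<close> lie in \<open>E\<close>. Near a point where the
  rank \<open>k\<close> of \<open>\<alpha>, \<dots>, \<nabla>\<^sup>k\<^sup>-\<^sup>1\<alpha>\<close> is locally maximal (such points are dense), \<open>\<nabla>\<^sup>k\<alpha>\<close>
  is a combination of the lower derivatives with holomorphic coefficients (found by Gaussian
  elimination), hence so is every \<open>\<nabla>\<^sup>n\<alpha>\<close>; as \<open>k \<le> g = dim E\<^sub>t\<close> they all lie in \<open>E\<^sub>t\<close>.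
  By the identity theorem \<open>\<alpha>(s) \<in> E\<^sub>t\<close> for all \<open>s\<close>, and since linear independence of a local
  frame of \<open>E\<close> is an open condition, this extends from a dense set of \<open>t\<close> to all of \<open>B\<close>.\<close>

section \<open>Finite families of vectors\<close>

definition indep_family :: "nat \<Rightarrow> (nat \<Rightarrow> complex^'n) \<Rightarrow> bool" where
  "indep_family k u \<longleftrightarrow> (\<forall>a. (\<Sum>i<k. a i *s u i) = 0 \<longrightarrow> (\<forall>i<k. a i = 0))"

lemma span_image_lessThan_iff:
  fixes u :: "nat \<Rightarrow> complex^'n"
  shows "x \<in> vec.span (u ` {..<k}) \<longleftrightarrow> (\<exists>a. x = (\<Sum>i<k. a i *s u i))"
proof (induction k arbitrary: x)
  case 0
  then show ?case by simp
next
  case (Suc k)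
  have "x \<in> vec.span (u ` {..<Suc k}) \<longleftrightarrow> (\<exists>c a. x - c *s u k = (\<Sum>i<k. a i *s u i))"
    by (simp add: lessThan_Suc vec.span_insert Suc.IH)
  also have "\<dots> \<longleftrightarrow> (\<exists>a. x = (\<Sum>i<Suc k. a i *s u i))"
  proof
    assume "\<exists>c a. x - c *s u k = (\<Sum>i<k. a i *s u i)"
    then obtain c a where "x - c *s u k = (\<Sum>i<k. a i *s u i)" by blast
    then have "x = (\<Sum>i<Suc k. (a(k := c)) i *s u i)" by (simp add: algebra_simps)
    then show "\<exists>a. x = (\<Sum>i<Suc k. a i *s u i)" by blast
  next
    assume "\<exists>a. x = (\<Sum>i<Suc k. a i *s u i)"
    then obtain a where "x = (\<Sum>i<Suc k. a i *s u i)" by blast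
    then have "x - a k *s u k = (\<Sum>i<k. a i *s u i)" by simp
    then show "\<exists>c a. x - c *s u k = (\<Sum>i<k. a i *s u i)" by blast
  qed
  finally show ?case .
qed

lemma sum_indicator_scale:
  fixes u :: "nat \<Rightarrow> complex^'n"
  assumes "j < k"
  shows "(\<Sum>i<k. (if i = j then 1 else 0) *s u i) = u j"
proof -
  have "(\<Sum>i<k. (if i = j then 1 else 0) *s u i) = (\<Sum>i\<in>{j}. (if i = j then 1 else 0) *s u i)"
    using assms by (intro sum.mono_neutral_right) auto
  then show ?thesis by simp
qed

lemma sum_scale_combine:
  fixes u :: "nat \<Rightarrow> complex^'n"
  shows "(\<Sum>i<k. D i *s u i + d i *s (\<Sum>l<k. r i l *s u l)) =
         (\<Sum>l<k. (D l + (\<Sum>i<k. d i * r i l)) *s u l)"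
proof -
  have "(\<Sum>i<k. d i * (\<Sum>l<k. r i l * u l $ j)) = (\<Sum>i<k. \<Sum>l<k. d i * r i l * u l $ j)" for j
    by (simp add: sum_distrib_left mult.assoc)
  also have "\<dots> j = (\<Sum>l<k. \<Sum>i<k. d i * r i l * u l $ j)" for j
    by (rule sum.swap)
  also have "\<dots> j = (\<Sum>l<k. (\<Sum>i<k. d i * r i l) * u l $ j)" for j
    by (simp add: sum_distrib_right)
  finally have "(\<Sum>i<k. d i * (\<Sum>l<k. r i l * u l $ j)) = (\<Sum>l<k. (\<Sum>i<k. d i * r i l) * u l $ j)" for j .
  then show ?thesis by (simp add: vec_eq_iff sum.distrib distrib_right)
qed

lemma indep_family_cong:
  "(\<And>i. i < k \<Longrightarrow> u i = w i) \<Longrightarrow> indep_family k u \<longleftrightarrow> indep_family k w"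
  unfolding indep_family_def by (metis (no_types, lifting) lessThan_iff sum.cong)

lemma indep_family_Suc_iff:
  "indep_family (Suc k) u \<longleftrightarrow> indep_family k u \<and> u k \<notin> vec.span (u ` {..<k})"
proof
  assume indep: "indep_family (Suc k) u"
  have "indep_family k u"
    unfolding indep_family_def
  proof (rule allI, rule impI)
    fix a assume "(\<Sum>i<k. a i *s u i) = 0"
    then have "(\<Sum>i<Suc k. (a(k := 0)) i *s u i) = 0" by simp
    then have "\<forall>i<Suc k. (a(k := 0)) i = 0" using indep unfolding indep_family_def by blast
    then show "\<forall>i<k. a i = 0" by (metis fun_upd_apply less_SucI less_not_refl)
  qed
  moreover have "u k \<notin> vec.span (u ` {..<k})"
  proof
    assume "u k \<in> vec.span (u ` {..<k})"
    then obtain a where "u k = (\<Sum>i<k. a i *s u i)" by (auto simp: span_image_lessThan_iff)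
    then have "(\<Sum>i<Suc k. (a(k := -1)) i *s u i) = 0" by simp
    then have "(a(k := -1)) k = 0" using indep unfolding indep_family_def by blast
    then show False by simp
  qed
  ultimately show "indep_family k u \<and> u k \<notin> vec.span (u ` {..<k})" ..
next
  assume "indep_family k u \<and> u k \<notin> vec.span (u ` {..<k})"
  then have indep: "indep_family k u" and notin: "u k \<notin> vec.span (u ` {..<k})" by auto
  show "indep_family (Suc k) u"
    unfolding indep_family_def
  proof (rule allI, rule impI)
    fix a assume sum0: "(\<Sum>i<Suc k. a i *s u i) = 0"
    have "a k = 0"
    proof (rule ccontr)
      assume "a k \<noteq> 0"
      have "a k *s u k = - (\<Sum>i<k. a i *s u i)"
        using sum0 by (simp add: eq_neg_iff_add_eq_0 add.commute)
      then have "u k = (- 1 / a k) *s (\<Sum>i<k. a i *s u i)"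
        using \<open>a k \<noteq> 0\<close> by (simp add: vec_eq_iff field_simps)
      also have "\<dots> = (\<Sum>i<k. (- a i / a k) *s u i)"
        by (simp add: vec_eq_iff sum_distrib_left sum_negf)
      finally have "u k \<in> vec.span (u ` {..<k})"
        unfolding span_image_lessThan_iff by (rule exI[of _ "\<lambda>i. - a i / a k"])
      with notin show False ..
    qed
    with sum0 indep have "\<forall>i<k. a i = 0" unfolding indep_family_def by simp
    with \<open>a k = 0\<close> show "\<forall>i<Suc k. a i = 0" using less_Suc_eq by auto
  qed
qed

lemma indep_family_imp_nonzero: "indep_family (Suc k) u \<Longrightarrow> u k \<noteq> 0"
  by (auto simp: indep_family_Suc_iff vec.span_zero)

lemma indep_family_iff_independent:
  fixes u :: "nat \<Rightarrow> complex^'n"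
  shows "indep_family k u \<longleftrightarrow> inj_on u {..<k} \<and> vec.independent (u ` {..<k})"
proof
  assume indep: "indep_family k u"
  show "inj_on u {..<k} \<and> vec.independent (u ` {..<k})"
  proof
    show inj: "inj_on u {..<k}"
    proof (rule inj_onI, rule ccontr)
      fix i j assume ij: "i \<in> {..<k}" "j \<in> {..<k}" "u i = u j" "i \<noteq> j"
      define a where "a = (\<lambda>l. if l = i then (1::complex) else if l = j then -1 else 0)"
      have "(\<Sum>l<k. a l *s u l) = (\<Sum>l\<in>{i,j}. a l *s u l)"
        by (rule sum.mono_neutral_right) (use ij in \<open>auto simp: a_def\<close>)
      also have "\<dots> = 0" using ij by (simp add: a_def)
      finally have "a i = 0" using indep ij unfolding indep_family_def by blast
      then show False by (simp add: a_def)
    qed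
    show "vec.independent (u ` {..<k})"
      unfolding vec.independent_explicit
    proof (intro conjI allI impI ballI)
      fix c v assume sum0: "(\<Sum>v\<in>u ` {..<k}. c v *s v) = 0" and v: "v \<in> u ` {..<k}"
      have "(\<Sum>i<k. c (u i) *s u i) = 0"
        using sum0 sum.reindex[OF inj, of "\<lambda>v. c v *s v"] by simp
      with v indep show "c v = 0" unfolding indep_family_def by auto
    qed simp
  qed
next
  assume "inj_on u {..<k} \<and> vec.independent (u ` {..<k})"
  then have inj: "inj_on u {..<k}" and independent: "vec.independent (u ` {..<k})" by auto
  show "indep_family k u"
    unfolding indep_family_def
  proof (rule allI, rule impI)
    fix a assume sum0: "(\<Sum>i<k. a i *s u i) = 0"
    define c where "c = (\<lambda>v. a (the_inv_into {..<k} u v))"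
    have "(\<Sum>v\<in>u ` {..<k}. c v *s v) = 0"
      using sum0 inj by (simp add: sum.reindex c_def the_inv_into_f_f)
    then have "\<forall>v\<in>u ` {..<k}. c v = 0"
      using independent unfolding vec.independent_explicit by blast
    then show "\<forall>i<k. a i = 0" using inj by (simp add: c_def the_inv_into_f_f)
  qed
qed

lemma indep_family_le_dim:
  assumes "\<forall>i<k. u i \<in> S" and "indep_family k u"
  shows "k \<le> vec.dim S"
proof -
  have "card (u ` {..<k}) \<le> vec.dim S"
    using assms by (intro vec.independent_card_le_dim) (auto simp: indep_family_iff_independent)
  then show ?thesis
    using assms(2) by (simp add: indep_family_iff_independent card_image)
qed

lemma indep_family_if_dim_span:
  fixes u :: "nat \<Rightarrow> complex^'n"
  assumes "vec.dim (vec.span (u ` {..<k})) = k"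
  shows "indep_family k u"
proof -
  have card: "card (u ` {..<k}) \<le> k" using card_image_le[of "{..<k}" u] by simp
  have "k \<le> card (u ` {..<k})"
    using vec.dim_le_card[OF order_refl] assms by (metis finite_imageI finite_lessThan)
  with card have "card (u ` {..<k}) = k" by simp
  then have "inj_on u {..<k}" by (simp add: eq_card_imp_inj_on)
  moreover have "vec.independent (u ` {..<k})"
    by (rule vec.card_le_dim_spanning[OF vec.span_superset order_refl]) (use card assms in auto)
  ultimately show ?thesis by (simp add: indep_family_iff_independent)
qed

section \<open>Gaussian elimination\<close>

definition eliminate :: "'n \<Rightarrow> complex^'n \<Rightarrow> complex^'n \<Rightarrow> complex^'n" where
  "eliminate m p x = x - (x $ m / p $ m) *s p"

lemma linear_eliminate: "Vector_Spaces.linear (*s) (*s) (eliminate m p)"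
  by unfold_locales (auto simp: eliminate_def vec_eq_iff algebra_simps add_divide_distrib)

lemma eliminate_self: "p $ m \<noteq> 0 \<Longrightarrow> eliminate m p p = 0"
  by (simp add: eliminate_def)

lemma eliminate_eq_0_iff: "eliminate m p x = 0 \<longleftrightarrow> x = (x $ m / p $ m) *s p"
  by (simp add: eliminate_def)

lemma eliminate_eq_iff:
  "eliminate m p x = eliminate m p y \<longleftrightarrow> x - y = ((x - y) $ m / p $ m) *s p"
  by (metis eliminate_eq_0_iff right_minus_eq vec.linear_diff[OF linear_eliminate])

lemma eliminate_sum:
  "eliminate m p (\<Sum>i<k. a i *s u i) = (\<Sum>i<k. a i *s eliminate m p (u i))"
  by (simp add: vec.linear_sum[OF linear_eliminate] vec.linear_scale[OF linear_eliminate])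

lemma indep_family_Suc_eliminate:
  assumes pivot: "u k $ m \<noteq> 0"
  shows "indep_family (Suc k) u \<longleftrightarrow> indep_family k (\<lambda>i. eliminate m (u k) (u i))"
proof
  assume indep: "indep_family (Suc k) u"
  show "indep_family k (\<lambda>i. eliminate m (u k) (u i))"
    unfolding indep_family_def
  proof (rule allI, rule impI)
    fix a assume "(\<Sum>i<k. a i *s eliminate m (u k) (u i)) = 0"
    then have "eliminate m (u k) (\<Sum>i<k. a i *s u i) = 0"
      by (simp add: eliminate_sum)
    then obtain c where "(\<Sum>i<k. a i *s u i) = c *s u k"
      unfolding eliminate_eq_0_iff by blast
    then have "(\<Sum>i<Suc k. (a(k := - c)) i *s u i) = 0" by simp
    then have "\<forall>i<Suc k. (a(k := - c)) i = 0"
      using indep unfolding indep_family_def by blast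
    then show "\<forall>i<k. a i = 0" by (metis fun_upd_apply less_SucI less_not_refl)
  qed
next
  assume indep: "indep_family k (\<lambda>i. eliminate m (u k) (u i))"
  show "indep_family (Suc k) u"
    unfolding indep_family_def
  proof (rule allI, rule impI)
    fix a assume sum0: "(\<Sum>i<Suc k. a i *s u i) = 0"
    have "(\<Sum>i<k. a i *s eliminate m (u k) (u i)) = (\<Sum>i<Suc k. a i *s eliminate m (u k) (u i))"
      using pivot by (simp add: eliminate_self)
    also have "\<dots> = eliminate m (u k) (\<Sum>i<Suc k. a i *s u i)"
      unfolding eliminate_sum ..
    also have "\<dots> = 0" unfolding sum0 by (rule vec.linear_0[OF linear_eliminate])
    finally have ak: "\<forall>i<k. a i = 0" using indep unfolding indep_family_def by blast
    then have "a k *s u k = 0" using sum0 by simp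
    then have "a k = 0" using pivot by (metis vector_smult_component zero_index mult_eq_0_iff)
    with ak show "\<forall>i<Suc k. a i = 0" using less_Suc_eq by auto
  qed
qed

lemma eliminate_in_span:
  assumes "u k $ m \<noteq> 0" and "x \<in> vec.span (u ` {..<Suc k})"
  shows "eliminate m (u k) x \<in> vec.span ((\<lambda>i. eliminate m (u k) (u i)) ` {..<k})"
proof -
  obtain a where x: "x = (\<Sum>i<Suc k. a i *s u i)"
    using assms(2) unfolding span_image_lessThan_iff by blast
  have "eliminate m (u k) x = (\<Sum>i<Suc k. a i *s eliminate m (u k) (u i))"
    unfolding x eliminate_sum ..
  also have "\<dots> = (\<Sum>i<k. a i *s eliminate m (u k) (u i))"
    using assms(1) by (simp add: eliminate_self)
  finally have "eliminate m (u k) x = (\<Sum>i<k. a i *s eliminate m (u k) (u i))" .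
  then show ?thesis unfolding span_image_lessThan_iff by blast
qed

section \<open>Holomorphic families of vectors\<close>

lemma vec_holomorphic_subset: "vec_holomorphic W x \<Longrightarrow> V \<subseteq> W \<Longrightarrow> vec_holomorphic V x"
  unfolding vec_holomorphic_def by (blast intro: holomorphic_on_subset)

lemma vec_holomorphic_const: "vec_holomorphic W (\<lambda>t. u)"
  by (simp add: vec_holomorphic_def)

lemma vec_holomorphic_eliminate:
  assumes "vec_holomorphic W x" "vec_holomorphic W p" "\<forall>t\<in>W. p t $ m \<noteq> 0"
  shows "vec_holomorphic W (\<lambda>t. eliminate m (p t) (x t))"
  using assms unfolding vec_holomorphic_def eliminate_def by (auto intro!: holomorphic_intros)

lemma pivot_neighbourhood:
  assumes "open W" "t0 \<in> W" "vec_holomorphic W p" "p t0 \<noteq> 0"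
  obtains m W' where "open W'" "t0 \<in> W'" "W' \<subseteq> W" "\<forall>t\<in>W'. p t $ m \<noteq> 0"
proof -
  obtain m where m: "p t0 $ m \<noteq> 0" using assms(4) by (auto simp: vec_eq_iff)
  have "continuous_on W (\<lambda>t. p t $ m)"
    using assms(3) unfolding vec_holomorphic_def by (blast intro: holomorphic_on_imp_continuous_on)
  then have "open (W \<inter> (\<lambda>t. p t $ m) -` (- {0}))"
    using continuous_open_preimage assms(1) by blast
  with that[of "W \<inter> (\<lambda>t. p t $ m) -` (- {0})" m] show thesis using assms(2) m by auto
qed

lemma eventually_indep_family:
  assumes "open W" "t0 \<in> W" "\<forall>i<k. vec_holomorphic W (v i)" "indep_family k (\<lambda>i. v i t0)"
  shows "eventually (\<lambda>t. indep_family k (\<lambda>i. v i t)) (nhds t0)"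
  using assms
proof (induction k arbitrary: W v)
  case 0
  then show ?case by (simp add: indep_family_def)
next
  case (Suc k)
  have hol: "vec_holomorphic W (v k)" and nz: "v k t0 \<noteq> 0"
    using Suc.prems(3,4) indep_family_imp_nonzero by auto
  obtain m W' where W': "open W'" "t0 \<in> W'" "W' \<subseteq> W" and pivot: "\<forall>t\<in>W'. v k t $ m \<noteq> 0"
    by (rule pivot_neighbourhood[OF Suc.prems(1,2) hol nz])
  define w where "w i t = eliminate m (v k t) (v i t)" for i t
  have pivot_iff: "indep_family (Suc k) (\<lambda>i. v i t) \<longleftrightarrow> indep_family k (\<lambda>i. w i t)"
    if "t \<in> W'" for t
    using that pivot indep_family_Suc_eliminate[of "\<lambda>i. v i t" k m] by (simp add: w_def)
  have "\<forall>i<Suc k. vec_holomorphic W' (v i)"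
    using Suc.prems(3) vec_holomorphic_subset[OF _ W'(3)] by blast
  then have "\<forall>i<k. vec_holomorphic W' (w i)"
    using pivot unfolding w_def by (auto intro!: vec_holomorphic_eliminate)
  moreover have "indep_family k (\<lambda>i. w i t0)"
    using Suc.prems(4) pivot_iff W'(2) by blast
  ultimately have "eventually (\<lambda>t. indep_family k (\<lambda>i. w i t)) (nhds t0)"
    using Suc.IH W'(1,2) by blast
  moreover have "eventually (\<lambda>t. t \<in> W') (nhds t0)"
    using W'(1,2) eventually_nhds_in_open by blast
  ultimately show ?case
    by eventually_elim (use pivot_iff in blast)
qed

definition holo_combination ::
    "complex set \<Rightarrow> nat \<Rightarrow> (nat \<Rightarrow> complex \<Rightarrow> complex^'n) \<Rightarrow> (complex \<Rightarrow> complex^'n) \<Rightarrow> bool" where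
  "holo_combination W k v x \<longleftrightarrow>
     (\<exists>c. (\<forall>i<k. c i holomorphic_on W) \<and> (\<forall>t\<in>W. x t = (\<Sum>i<k. c i t *s v i t)))"

lemma holo_combination_in_span:
  assumes "holo_combination W k v x" "t \<in> W"
  shows "x t \<in> vec.span ((\<lambda>i. v i t) ` {..<k})"
proof -
  obtain c where "x t = (\<Sum>i<k. c i t *s v i t)"
    using assms unfolding holo_combination_def by blast
  then show ?thesis unfolding span_image_lessThan_iff by (rule exI[of _ "\<lambda>i. c i t"])
qed

lemma holo_combination_member: "j < k \<Longrightarrow> holo_combination W k v (v j)"
  unfolding holo_combination_def
  by (rule exI[of _ "\<lambda>i t. if i = j then 1 else 0"]) (simp add: sum_indicator_scale)

lemma holo_combination_locally:
  assumes "open W" "t0 \<in> W" "\<forall>i<k. vec_holomorphic W (v i)"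
    and "\<forall>t\<in>W. indep_family k (\<lambda>i. v i t)"
    and "vec_holomorphic W x" "\<forall>t\<in>W. x t \<in> vec.span ((\<lambda>i. v i t) ` {..<k})"
  shows "\<exists>W'. open W' \<and> t0 \<in> W' \<and> W' \<subseteq> W \<and> holo_combination W' k v x"
  using assms
proof (induction k arbitrary: W v x)
  case 0
  then show ?case by (auto simp: holo_combination_def)
next
  case (Suc k)
  have hol: "vec_holomorphic W (v k)" and nz: "v k t0 \<noteq> 0"
    using Suc.prems(2,3,4) indep_family_imp_nonzero by auto
  obtain m W2 where W2: "open W2" "t0 \<in> W2" "W2 \<subseteq> W" and pivot: "\<forall>t\<in>W2. v k t $ m \<noteq> 0"
    by (rule pivot_neighbourhood[OF Suc.prems(1,2) hol nz])
  define w where "w i t = eliminate m (v k t) (v i t)" for i t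
  define y where "y t = eliminate m (v k t) (x t)" for t
  have "\<forall>i<Suc k. vec_holomorphic W2 (v i)" "vec_holomorphic W2 x"
    using Suc.prems(3,5) vec_holomorphic_subset[OF _ W2(3)] by blast+
  then have "\<forall>i<k. vec_holomorphic W2 (w i)" "vec_holomorphic W2 y"
    using pivot unfolding w_def y_def by (auto intro!: vec_holomorphic_eliminate)
  moreover have "\<forall>t\<in>W2. indep_family k (\<lambda>i. w i t)"
    using Suc.prems(4) pivot W2(3) indep_family_Suc_eliminate[of "\<lambda>i. v i _" k m]
    by (auto simp: w_def)
  moreover have "\<forall>t\<in>W2. y t \<in> vec.span ((\<lambda>i. w i t) ` {..<k})"
    using Suc.prems(6) pivot W2(3) eliminate_in_span[of "\<lambda>i. v i _" k m] unfolding w_def y_def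
    by auto
  ultimately obtain W' c where W': "open W'" "t0 \<in> W'" "W' \<subseteq> W2"
    and c: "\<forall>i<k. c i holomorphic_on W'" and y: "\<forall>t\<in>W'. y t = (\<Sum>i<k. c i t *s w i t)"
    using Suc.IH[of W2 w y] W2(1,2) unfolding holo_combination_def by blast
  define s where "s t = (\<Sum>i<k. c i t *s v i t)" for t
  define c' where "c' = c(k := (\<lambda>t. (x t - s t) $ m / v k t $ m))"
  have "x t = (\<Sum>i<Suc k. c' i t *s v i t)" if t: "t \<in> W'" for t
  proof -
    have "eliminate m (v k t) (x t) = eliminate m (v k t) (s t)"
      using y t unfolding y_def w_def s_def eliminate_sum by simp
    then have "x t - s t = ((x t - s t) $ m / v k t $ m) *s v k t"
      unfolding eliminate_eq_iff .
    then show ?thesis by (simp add: c'_def s_def algebra_simps)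
  qed
  moreover have "\<forall>i<Suc k. c' i holomorphic_on W'"
  proof -
    have "vec_holomorphic W' x" "\<forall>i<Suc k. vec_holomorphic W' (v i)"
      using Suc.prems(3,5) W'(3) W2(3) by (auto intro: vec_holomorphic_subset)
    then have "(\<lambda>t. (x t - s t) $ m / v k t $ m) holomorphic_on W'"
      using c pivot W'(3) unfolding s_def vec_holomorphic_def
      by (auto intro!: holomorphic_intros)
    with c show ?thesis by (simp add: c'_def less_Suc_eq)
  qed
  ultimately show ?case
    using W' W2(3) unfolding holo_combination_def by blast
qed

section \<open>The Gauss-Manin derivative\<close>

lemma nablat_cong:
  assumes "open W" "t \<in> W" "\<forall>s\<in>W. \<beta> s = \<gamma> s"
  shows "nablat \<beta> t = nablat \<gamma> t"
proof -
  have "eventually (\<lambda>s. s \<in> W) (nhds t)" using assms(1,2) eventually_nhds_in_open by blast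
  then have "deriv (\<lambda>s. \<beta> s $ i) t = deriv (\<lambda>s. \<gamma> s $ i) t" for i
    by (rule deriv_cong_ev[OF eventually_mono]) (use assms(3) in auto)
  then show ?thesis unfolding nablat_def by simp
qed

lemma vec_holomorphic_nablat: "vec_holomorphic W \<beta> \<Longrightarrow> open W \<Longrightarrow> vec_holomorphic W (nablat \<beta>)"
  unfolding vec_holomorphic_def nablat_def by (simp add: holomorphic_deriv)

lemma vec_holomorphic_funpow_nablat:
  "vec_holomorphic W \<beta> \<Longrightarrow> open W \<Longrightarrow> vec_holomorphic W ((nablat ^^ n) \<beta>)"
  by (induction n) (auto intro: vec_holomorphic_nablat)

lemma nablat_sum_scale:
  assumes "open W" "t \<in> W" "\<forall>i<k. c i holomorphic_on W" "\<forall>i<k. vec_holomorphic W (v i)"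
    and "\<forall>s\<in>W. \<beta> s = (\<Sum>i<k. c i s *s v i s)"
  shows "nablat \<beta> t = (\<Sum>i<k. deriv (c i) t *s v i t + c i t *s nablat (v i) t)"
proof -
  have "nablat \<beta> t = nablat (\<lambda>s. \<Sum>i<k. c i s *s v i s) t"
    using assms(5) by (intro nablat_cong[OF assms(1,2)]) auto
  also have "\<dots> = (\<Sum>i<k. deriv (c i) t *s v i t + c i t *s nablat (v i) t)"
    unfolding vec_eq_iff
  proof
    fix m
    have "((\<lambda>s. \<Sum>i<k. c i s * v i s $ m) has_field_derivative
          (\<Sum>i<k. deriv (c i) t * v i t $ m + c i t * deriv (\<lambda>s. v i s $ m) t)) (at t)"
    proof (rule DERIV_sum)
      fix i assume "i \<in> {..<k}"
      then have "c i holomorphic_on W" "(\<lambda>s. v i s $ m) holomorphic_on W"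
        using assms(3,4) by (auto simp: vec_holomorphic_def)
      then have "(c i has_field_derivative deriv (c i) t) (at t)"
        "((\<lambda>s. v i s $ m) has_field_derivative deriv (\<lambda>s. v i s $ m) t) (at t)"
        using holomorphic_derivI assms(1,2) by blast+
      from DERIV_mult[OF this] show "((\<lambda>s. c i s * v i s $ m) has_field_derivative
          deriv (c i) t * v i t $ m + c i t * deriv (\<lambda>s. v i s $ m) t) (at t)"
        by (simp add: algebra_simps)
    qed
    then show "nablat (\<lambda>s. \<Sum>i<k. c i s *s v i s) t $ m =
        (\<Sum>i<k. deriv (c i) t *s v i t + c i t *s nablat (v i) t) $ m"
      by (simp add: nablat_def sum_component DERIV_imp_deriv)
  qed
  finally show ?thesis .
qed

lemma holo_combination_nablat:
  assumes "open W" "\<forall>i<k. vec_holomorphic W (v i)"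
    and "\<forall>i<k. holo_combination W k v (nablat (v i))" and "holo_combination W k v x"
  shows "holo_combination W k v (nablat x)"
proof -
  obtain c where c: "\<forall>i<k. c i holomorphic_on W" and x: "\<forall>t\<in>W. x t = (\<Sum>i<k. c i t *s v i t)"
    using assms(4) unfolding holo_combination_def by blast
  have "\<forall>i. \<exists>ri. i < k \<longrightarrow>
      (\<forall>l<k. ri l holomorphic_on W) \<and> (\<forall>t\<in>W. nablat (v i) t = (\<Sum>l<k. ri l t *s v l t))"
    using assms(3) unfolding holo_combination_def by blast
  then obtain r where r: "\<forall>i<k. (\<forall>l<k. r i l holomorphic_on W) \<and>
      (\<forall>t\<in>W. nablat (v i) t = (\<Sum>l<k. r i l t *s v l t))"
    by (rule exE[OF choice]) blast
  define e where "e l t = deriv (c l) t + (\<Sum>i<k. c i t * r i l t)" for l t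
  have "\<forall>l<k. e l holomorphic_on W"
    unfolding e_def using c r assms(1) by (auto intro!: holomorphic_intros)
  moreover have "nablat x t = (\<Sum>l<k. e l t *s v l t)" if t: "t \<in> W" for t
  proof -
    have "nablat x t = (\<Sum>i<k. deriv (c i) t *s v i t + c i t *s nablat (v i) t)"
      by (rule nablat_sum_scale[OF assms(1) t c assms(2) x])
    also have "\<dots> = (\<Sum>i<k. deriv (c i) t *s v i t + c i t *s (\<Sum>l<k. r i l t *s v l t))"
      using r t by (intro sum.cong) auto
    also have "\<dots> = (\<Sum>l<k. e l t *s v l t)"
      unfolding e_def by (rule sum_scale_combine)
    finally show ?thesis .
  qed
  ultimately show ?thesis unfolding holo_combination_def by blast
qed

lemma funpow_nablat_holo_combination:
  assumes "open W" "t0 \<in> W" "vec_holomorphic W \<alpha>"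
    and "\<forall>t\<in>W. indep_family k (\<lambda>i. (nablat ^^ i) \<alpha> t)"
    and "\<forall>t\<in>W. (nablat ^^ k) \<alpha> t \<in> vec.span ((\<lambda>i. (nablat ^^ i) \<alpha> t) ` {..<k})"
  obtains W' where "open W'" "t0 \<in> W'" "W' \<subseteq> W"
    and "\<And>n. holo_combination W' k (\<lambda>i. (nablat ^^ i) \<alpha>) ((nablat ^^ n) \<alpha>)"
proof -
  let ?a = "\<lambda>i. (nablat ^^ i) \<alpha>"
  have hol: "vec_holomorphic W (?a i)" for i
    using vec_holomorphic_funpow_nablat assms(1,3) by blast
  obtain W' where W': "open W'" "t0 \<in> W'" "W' \<subseteq> W" and ak: "holo_combination W' k ?a (?a k)"
    using holo_combination_locally[OF assms(1,2) _ assms(4) hol assms(5)] hol by blast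
  have hol': "\<forall>i<k. vec_holomorphic W' (?a i)"
    using hol vec_holomorphic_subset[OF _ W'(3)] by blast
  have "holo_combination W' k ?a (nablat (?a i))" if "i < k" for i
    using ak holo_combination_member[of "Suc i" k W' ?a] that by (cases "Suc i = k") auto
  then have "\<forall>i<k. holo_combination W' k ?a (nablat (?a i))" by blast
  then have "holo_combination W' k ?a (?a n)" for n
  proof (induction n)
    case 0
    then show ?case using ak holo_combination_member[of 0 k W' ?a] by (cases k) auto
  next
    case (Suc n)
    then show ?case using holo_combination_nablat[OF W'(1) hol'] by simp
  qed
  with W' that show thesis by blast
qed

lemma exists_point_funpow_nablat_in_fibre:
  assumes B: "open B" and hol: "vec_holomorphic B \<alpha>"
    and E: "\<forall>t\<in>B. vec.subspace (E t) \<and> vec.dim (E t) \<le> g"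
    and derivs: "\<forall>n\<le>g. \<forall>t\<in>B. (nablat ^^ n) \<alpha> t \<in> E t"
    and W: "open W" "W \<inter> B \<noteq> {}"
  shows "\<exists>t\<in>W \<inter> B. \<forall>n. (nablat ^^ n) \<alpha> t \<in> E t"
proof -
  let ?a = "\<lambda>i. (nablat ^^ i) \<alpha>"
  define W0 where "W0 = W \<inter> B"
  have W0: "open W0" "W0 \<subseteq> B" using W B by (auto simp: W0_def)
  have hol0: "vec_holomorphic W0 (?a i)" for i
    using vec_holomorphic_funpow_nablat[OF hol B] vec_holomorphic_subset W0(2) by blast
  define K where "K = {k. k \<le> g \<and> (\<exists>t\<in>W0. indep_family k (\<lambda>i. ?a i t))}"
  have "0 \<in> K" "finite K"
    using W(2) by (auto simp: K_def W0_def indep_family_def)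
  then have "Max K \<in> K" by (intro Max_in) auto
  then obtain k t1 where k: "k = Max K" "k \<le> g" and t1: "t1 \<in> W0" "indep_family k (\<lambda>i. ?a i t1)"
    unfolding K_def by blast
  have maximal: "\<not> indep_family (Suc k) (\<lambda>i. ?a i t)" if "t \<in> W0" for t
  proof
    assume indep: "indep_family (Suc k) (\<lambda>i. ?a i t)"
    show False
    proof (cases "Suc k \<le> g")
      case True
      with indep that have "Suc k \<in> K" by (auto simp: K_def)
      then have "Suc k \<le> Max K" using Max_ge \<open>finite K\<close> by blast
      with k(1) show False by simp
    next
      case False
      have "\<forall>i<Suc k. ?a i t \<in> E t" using derivs that W0(2) k(2) by auto
      then have "Suc k \<le> vec.dim (E t)" using indep by (rule indep_family_le_dim)
      moreover have "vec.dim (E t) \<le> g" using E that W0(2) by blast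
      ultimately show False using False by simp
    qed
  qed
  have "eventually (\<lambda>t. indep_family k (\<lambda>i. ?a i t)) (nhds t1)"
    by (rule eventually_indep_family) (use W0(1) t1 hol0 in auto)
  then obtain S where S: "open S" "t1 \<in> S" and indepS: "\<forall>t\<in>S. indep_family k (\<lambda>i. ?a i t)"
    unfolding eventually_nhds by blast
  define W1 where "W1 = S \<inter> W0"
  have W1: "open W1" "t1 \<in> W1" "W1 \<subseteq> W0" using S W0(1) t1(1) by (auto simp: W1_def)
  have indep1: "\<forall>t\<in>W1. indep_family k (\<lambda>i. ?a i t)" using indepS by (auto simp: W1_def)
  have span1: "\<forall>t\<in>W1. ?a k t \<in> vec.span ((\<lambda>i. ?a i t) ` {..<k})"
  proof
    fix t assume t: "t \<in> W1"
    then have "\<not> indep_family (Suc k) (\<lambda>i. ?a i t)" using maximal W1(3) by blast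
    then show "?a k t \<in> vec.span ((\<lambda>i. ?a i t) ` {..<k})"
      using indep1 t indep_family_Suc_iff[of k "\<lambda>i. ?a i t"] by simp
  qed
  have "W1 \<subseteq> B" using W1(3) W0(2) by blast
  then obtain W' where "open W'" "t1 \<in> W'" "W' \<subseteq> W1" and comb: "\<And>n. holo_combination W' k ?a (?a n)"
    by (rule funpow_nablat_holo_combination[OF W1(1,2) vec_holomorphic_subset[OF hol] indep1 span1]) blast
  have "vec.span ((\<lambda>i. ?a i t1) ` {..<k}) \<subseteq> E t1"
    using derivs k(2) t1(1) W0(2) E by (intro vec.span_minimal) auto
  then have "\<forall>n. ?a n t1 \<in> E t1"
    using holo_combination_in_span[OF comb \<open>t1 \<in> W'\<close>] by blast
  with t1(1) show ?thesis unfolding W0_def by blast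
qed

section \<open>Subspace-valued sections\<close>

lemma subspace_separating_functional:
  fixes x :: "complex^'n"
  assumes S: "vec.subspace S" and x: "x \<notin> S"
  obtains L :: "'n \<Rightarrow> complex"
    where "\<forall>y\<in>S. (\<Sum>i\<in>UNIV. L i * y $ i) = 0" "(\<Sum>i\<in>UNIV. L i * x $ i) \<noteq> 0"
proof -
  obtain B0 where B0: "B0 \<subseteq> S" "vec.independent B0" "S \<subseteq> vec.span B0"
    using vec.basis_exists[of S] by metis
  have span: "vec.span B0 = S" using B0 vec.span_minimal[OF B0(1) S] by blast
  with x B0(2) have indep: "vec.independent (insert x B0)" and "x \<notin> B0"
    by (auto simp: vec.independent_insert intro: vec.span_base)
  define l where "l = vec.construct (insert x B0) (\<lambda>y. if y = x then x else 0)"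
  have lin: "Vector_Spaces.linear (*s) (*s) l"
    unfolding l_def by (rule vec.linear_construct[OF indep])
  have lx: "l x = x" unfolding l_def by (simp add: vec.construct_basis[OF indep])
  have lS: "l y = 0" if "y \<in> S" for y
  proof -
    have "l y = (\<lambda>_. 0) y"
    proof (rule vec.linear_eq_on_span[OF lin vec.linear_zero])
      show "y \<in> vec.span B0" using that span by simp
      fix z assume "z \<in> B0"
      with \<open>x \<notin> B0\<close> show "l z = 0" unfolding l_def by (auto simp: vec.construct_basis[OF indep])
    qed
    then show ?thesis by simp
  qed
  have "x \<noteq> 0" using x vec.subspace_0[OF S] by auto
  then obtain j where j: "x $ j \<noteq> 0" by (auto simp: vec_eq_iff)
  have l_component: "l y $ j = (\<Sum>i\<in>UNIV. matrix l $ j $ i * y $ i)" for y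
  proof -
    have "l y = matrix l *v y" using matrix_works[OF lin] by simp
    then show ?thesis by (simp add: matrix_vector_mult_def)
  qed
  show thesis
    by (rule that[of "\<lambda>i. matrix l $ j $ i"]) (use lS lx j in \<open>auto simp flip: l_component\<close>)
qed

lemma deriv_funpow_functional:
  assumes "open B" "vec_holomorphic B \<alpha>" "t \<in> B"
  shows "(deriv ^^ n) (\<lambda>s. \<Sum>i\<in>UNIV. L i * \<alpha> s $ i) t = (\<Sum>i\<in>UNIV. L i * (nablat ^^ n) \<alpha> t $ i)"
  using assms(3)
proof (induction n arbitrary: t)
  case 0
  then show ?case by simp
next
  case (Suc n)
  have "eventually (\<lambda>s. s \<in> B) (nhds t)" using assms(1) Suc.prems eventually_nhds_in_open by blast
  then have "(deriv ^^ Suc n) (\<lambda>s. \<Sum>i\<in>UNIV. L i * \<alpha> s $ i) t =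
      deriv (\<lambda>s. \<Sum>i\<in>UNIV. L i * (nablat ^^ n) \<alpha> s $ i) t"
    by (simp, intro deriv_cong_ev) (auto elim!: eventually_mono simp: Suc.IH)
  also have "\<dots> = (\<Sum>i\<in>UNIV. L i * deriv (\<lambda>s. (nablat ^^ n) \<alpha> s $ i) t)"
  proof (intro DERIV_imp_deriv DERIV_sum DERIV_cmult)
    fix i
    have "(\<lambda>s. (nablat ^^ n) \<alpha> s $ i) holomorphic_on B"
      using vec_holomorphic_funpow_nablat[OF assms(2,1)] unfolding vec_holomorphic_def by blast
    then show "((\<lambda>s. (nablat ^^ n) \<alpha> s $ i) has_field_derivative
        deriv (\<lambda>s. (nablat ^^ n) \<alpha> s $ i) t) (at t)"
      using holomorphic_derivI assms(1) Suc.prems by blast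
  qed
  also have "\<dots> = (\<Sum>i\<in>UNIV. L i * (nablat ^^ Suc n) \<alpha> t $ i)"
    by (simp add: nablat_def)
  finally show ?case .
qed

lemma in_subspace_if_funpow_nablat_in_subspace:
  assumes B: "open B" "connected B" and hol: "vec_holomorphic B \<alpha>"
    and S: "vec.subspace S" and t0: "t0 \<in> B" "\<forall>n. (nablat ^^ n) \<alpha> t0 \<in> S" and s: "s \<in> B"
  shows "\<alpha> s \<in> S"
proof (rule ccontr)
  assume "\<alpha> s \<notin> S"
  then obtain L where L: "\<forall>y\<in>S. (\<Sum>i\<in>UNIV. L i * y $ i) = 0" "(\<Sum>i\<in>UNIV. L i * \<alpha> s $ i) \<noteq> 0"
    by (rule subspace_separating_functional[OF S])
  define h where "h t = (\<Sum>i\<in>UNIV. L i * \<alpha> t $ i)" for t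
  have "h holomorphic_on B"
    using hol unfolding h_def vec_holomorphic_def by (auto intro!: holomorphic_intros)
  moreover have "(deriv ^^ n) h t0 = 0" for n
    using deriv_funpow_functional[OF B(1) hol t0(1)] L(1) t0(2) unfolding h_def by simp
  ultimately have "h s = 0" using holomorphic_fun_eq_0_on_connected B t0(1) s by blast
  with L(2) show False by (simp add: h_def)
qed

lemma nablat_in_subspace:
  assumes B: "open B" and hol: "vec_holomorphic B \<alpha>"
    and S: "vec.subspace S" "\<forall>s\<in>B. \<alpha> s \<in> S" and t: "t \<in> B"
  shows "nablat \<alpha> t \<in> S"
proof (rule ccontr)
  assume "nablat \<alpha> t \<notin> S"
  then obtain L where L: "\<forall>y\<in>S. (\<Sum>i\<in>UNIV. L i * y $ i) = 0" "(\<Sum>i\<in>UNIV. L i * nablat \<alpha> t $ i) \<noteq> 0"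
    by (rule subspace_separating_functional[OF S(1)])
  have "eventually (\<lambda>s. (\<Sum>i\<in>UNIV. L i * \<alpha> s $ i) = 0) (nhds t)"
    using eventually_nhds_in_open[OF B t] by eventually_elim (use S(2) L(1) in blast)
  then have "deriv (\<lambda>s. \<Sum>i\<in>UNIV. L i * \<alpha> s $ i) t = 0"
    by (simp add: deriv_cong_ev[of _ "\<lambda>_. 0"])
  with deriv_funpow_functional[OF B hol t, of 1 L] L(2) show False by simp
qed

lemma holo_subbundle_fibre_closed:
  assumes E: "holo_subbundle B g E" and t0: "t0 \<in> B"
    and near: "\<And>W. open W \<Longrightarrow> t0 \<in> W \<Longrightarrow> \<exists>t\<in>W \<inter> B. x \<in> E t"
  shows "x \<in> E t0"
proof (rule ccontr)
  assume x: "x \<notin> E t0"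
  have "\<exists>W e. open W \<and> t0 \<in> W \<and> W \<subseteq> B \<and> (\<forall>k<g. vec_holomorphic W (e k)) \<and>
      (\<forall>t\<in>W. E t = vec.span {e k t | k. k < g})"
    using E t0 unfolding holo_subbundle_def by blast
  then obtain W e where W: "open W" "t0 \<in> W" and hol: "\<forall>k<g. vec_holomorphic W (e k)"
    and span: "\<forall>t\<in>W. E t = vec.span {e k t | k. k < g}"
    by blast
  have span': "E t = vec.span ((\<lambda>k. e k t) ` {..<g})" if "t \<in> W" for t
  proof -
    have "{e k t | k. k < g} = (\<lambda>k. e k t) ` {..<g}" by auto
    with span that show ?thesis by simp
  qed
  define v where "v i t = (if i < g then e i t else x)" for i t
  have v_image: "(\<lambda>i. v i t) ` {..<g} = (\<lambda>i. e i t) ` {..<g}" for t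
    by (auto simp: v_def)
  have v_indep: "indep_family g (\<lambda>i. v i t) \<longleftrightarrow> indep_family g (\<lambda>i. e i t)" for t
    by (rule indep_family_cong) (simp add: v_def)
  have v_Suc: "indep_family (Suc g) (\<lambda>i. v i t) \<longleftrightarrow> indep_family g (\<lambda>i. e i t) \<and> x \<notin> E t"
    if "t \<in> W" for t
    using span'[OF that] by (simp add: indep_family_Suc_iff v_indep v_image) (simp add: v_def)
  have "vec.dim (E t0) = g" using E t0 unfolding holo_subbundle_def by blast
  then have "indep_family g (\<lambda>i. e i t0)"
    using span'[OF W(2)] by (simp add: indep_family_if_dim_span)
  with x have "indep_family (Suc g) (\<lambda>i. v i t0)" using v_Suc W(2) by blast
  moreover have "vec_holomorphic W (v i)" for i
  proof (cases "i < g")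
    case True
    then have "v i = e i" by (simp add: v_def fun_eq_iff)
    with hol True show ?thesis by simp
  next
    case False
    then have "v i = (\<lambda>t. x)" by (simp add: v_def fun_eq_iff)
    then show ?thesis by (simp add: vec_holomorphic_const)
  qed
  ultimately have "eventually (\<lambda>t. indep_family (Suc g) (\<lambda>i. v i t)) (nhds t0)"
    by (intro eventually_indep_family[OF W]) auto
  then obtain S where S: "open S" "t0 \<in> S" and indepS: "\<forall>t\<in>S. indep_family (Suc g) (\<lambda>i. v i t)"
    unfolding eventually_nhds by blast
  obtain t where "t \<in> S \<inter> W" "x \<in> E t" using near[of "S \<inter> W"] S W by blast
  with indepS v_Suc[of t] show False by blast
qed

section \<open>Flat unitary sections and the kernel of the Higgs field\<close>

lemma subspace_unitary_flat: "\<forall>t\<in>B. vec.subspace (E t) \<Longrightarrow> vec.subspace (unitary_flat B E)"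
  unfolding unitary_flat_def vec.subspace_def by auto

lemma Gamma_U_iff:
  fixes \<alpha> :: "complex \<Rightarrow> complex^'n"
  assumes E: "\<forall>t\<in>B. vec.subspace (E t)" and hol: "vec_holomorphic B \<alpha>"
  shows "Gamma_U B E \<alpha> \<longleftrightarrow> (\<forall>t\<in>B. \<alpha> t \<in> unitary_flat B E)"
proof
  assume "Gamma_U B E \<alpha>"
  then obtain k u f where u: "\<forall>i<(k::nat). u i \<in> unitary_flat B E"
    and \<alpha>: "\<forall>t\<in>B. \<alpha> t = (\<Sum>i<k. f i t *s u i)"
    unfolding Gamma_U_def by blast
  with subspace_unitary_flat[OF E] show "\<forall>t\<in>B. \<alpha> t \<in> unitary_flat B E"
    by (auto intro!: vec.subspace_sum vec.subspace_scale)
next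
  assume \<alpha>U: "\<forall>t\<in>B. \<alpha> t \<in> unitary_flat B E"
  let ?U = "unitary_flat B E"
  obtain B0 where B0: "B0 \<subseteq> ?U" "vec.independent B0" "?U \<subseteq> vec.span B0"
    using vec.basis_exists[of ?U] by metis
  define P where "P = vec.construct B0 id"
  have lin: "Vector_Spaces.linear (*s) (*s) P"
    unfolding P_def by (rule vec.linear_construct[OF B0(2)])
  have P_range: "P y \<in> ?U" for y
  proof -
    have "range P = vec.span B0"
      unfolding P_def using vec.range_construct_eq_span[OF B0(2), of id] by simp
    also have "\<dots> \<subseteq> ?U" using vec.span_minimal[OF B0(1) subspace_unitary_flat[OF E]] .
    finally show ?thesis by blast
  qed
  have P_id: "P y = y" if "y \<in> ?U" for y
    using vec.linear_eq_on_span[OF lin vec.linear_id, of B0 y] that B0(3)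
    by (auto simp: P_def vec.construct_basis[OF B0(2)])
  obtain h where h: "bij_betw h {..<CARD('n)} (UNIV::'n set)"
    using ex_bij_betw_nat_finite[of "UNIV::'n set"] by (auto simp: atLeast0LessThan)
  have "\<alpha> t = (\<Sum>i<CARD('n). \<alpha> t $ h i *s P (axis (h i) 1))" if "t \<in> B" for t
  proof -
    have "\<alpha> t = P (\<Sum>j\<in>UNIV. \<alpha> t $ j *s axis j 1)"
      using P_id \<alpha>U that by (simp add: basis_expansion)
    also have "\<dots> = (\<Sum>j\<in>UNIV. \<alpha> t $ j *s P (axis j 1))"
      by (simp add: vec.linear_sum[OF lin] vec.linear_scale[OF lin])
    also have "\<dots> = (\<Sum>i<CARD('n). \<alpha> t $ h i *s P (axis (h i) 1))"
      by (rule sum.reindex_bij_betw[OF h, symmetric])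
    finally show ?thesis .
  qed
  moreover have "(\<lambda>t. \<alpha> t $ h i) holomorphic_on B" for i
    using hol unfolding vec_holomorphic_def by blast
  ultimately show "Gamma_U B E \<alpha>"
    unfolding Gamma_U_def using P_range
    by (intro exI[of _ "CARD('n)"] exI[of _ "\<lambda>i. P (axis (h i) 1)"] exI[of _ "\<lambda>i t. \<alpha> t $ h i"])
      blast
qed

lemma higgs_eq_fibre_iff:
  assumes "vec.subspace (E t)"
  shows "higgs E \<beta> t = E t \<longleftrightarrow> nablat \<beta> t \<in> E t"
proof
  assume "higgs E \<beta> t = E t"
  moreover have "nablat \<beta> t + 0 \<in> higgs E \<beta> t"
    unfolding higgs_def using vec.subspace_0[OF assms] by blast
  ultimately show "nablat \<beta> t \<in> E t" by simp
next
  assume n: "nablat \<beta> t \<in> E t"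
  have "y \<in> higgs E \<beta> t" if "y \<in> E t" for y
  proof -
    have "y = nablat \<beta> t + (y - nablat \<beta> t)" by simp
    moreover have "y - nablat \<beta> t \<in> E t" by (rule vec.subspace_diff[OF assms that n])
    ultimately show ?thesis unfolding higgs_def by blast
  qed
  moreover have "higgs E \<beta> t \<subseteq> E t"
    unfolding higgs_def using vec.subspace_add[OF assms n] by blast
  ultimately show "higgs E \<beta> t = E t" by blast
qed

lemma Gamma_K_iff:
  assumes "\<forall>t\<in>B. vec.subspace (E t)"
  shows "Gamma_K B E \<beta> \<longleftrightarrow> vec_holomorphic B \<beta> \<and> (\<forall>t\<in>B. \<beta> t \<in> E t \<and> nablat \<beta> t \<in> E t)"
  using assms higgs_eq_fibre_iff unfolding Gamma_K_def hol_section_def by blast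

lemma Gamma_K_funpow_nablat_iff:
  assumes B: "open B" and E: "\<forall>t\<in>B. vec.subspace (E t)" and \<alpha>: "hol_section B E \<alpha>"
  shows "(\<forall>j<g. Gamma_K B E ((nablat ^^ j) \<alpha>)) \<longleftrightarrow> (\<forall>n\<le>g. \<forall>t\<in>B. (nablat ^^ n) \<alpha> t \<in> E t)"
proof
  assume K: "\<forall>j<g. Gamma_K B E ((nablat ^^ j) \<alpha>)"
  show "\<forall>n\<le>g. \<forall>t\<in>B. (nablat ^^ n) \<alpha> t \<in> E t"
  proof (intro allI impI)
    fix n assume "n \<le> g"
    then consider "n = 0" | j where "n = Suc j" "j < g" by (cases n) auto
    then show "\<forall>t\<in>B. (nablat ^^ n) \<alpha> t \<in> E t"
      by cases (use \<alpha> K Gamma_K_iff[OF E] in \<open>auto simp: hol_section_def\<close>)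
  qed
next
  assume derivs: "\<forall>n\<le>g. \<forall>t\<in>B. (nablat ^^ n) \<alpha> t \<in> E t"
  have "vec_holomorphic B ((nablat ^^ j) \<alpha>)" for j
    using \<alpha> B by (simp add: hol_section_def vec_holomorphic_funpow_nablat)
  with derivs show "\<forall>j<g. Gamma_K B E ((nablat ^^ j) \<alpha>)"
    by (auto simp: Gamma_K_iff[OF E] dest: Suc_leI)
qed

lemma funpow_nablat_in_unitary_flat:
  assumes B: "open B" and hol: "vec_holomorphic B \<alpha>" and E: "\<forall>t\<in>B. vec.subspace (E t)"
    and \<alpha>U: "\<forall>t\<in>B. \<alpha> t \<in> unitary_flat B E" and t: "t \<in> B"
  shows "(nablat ^^ n) \<alpha> t \<in> unitary_flat B E"
  using t
proof (induction n arbitrary: t)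
  case 0
  with \<alpha>U show ?case by simp
next
  case (Suc n)
  then show ?case
    using nablat_in_subspace[OF B vec_holomorphic_funpow_nablat[OF hol B] subspace_unitary_flat[OF E]]
    by simp
qed

lemma unitary_flat_if_funpow_nablat_in_fibres:
  assumes B: "open B" "connected B" and E: "holo_subbundle B g E" and hol: "vec_holomorphic B \<alpha>"
    and derivs: "\<forall>n\<le>g. \<forall>t\<in>B. (nablat ^^ n) \<alpha> t \<in> E t" and s: "s \<in> B"
  shows "\<alpha> s \<in> unitary_flat B E"
  unfolding unitary_flat_def
proof (intro CollectI ballI)
  fix t0 assume t0: "t0 \<in> B"
  have fibres: "\<forall>t\<in>B. vec.subspace (E t) \<and> vec.dim (E t) \<le> g"
    using E unfolding holo_subbundle_def by simp
  show "\<alpha> s \<in> E t0"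
  proof (rule holo_subbundle_fibre_closed[OF E t0])
    fix W assume "open W" "t0 \<in> W"
    then obtain t1 where t1: "t1 \<in> W \<inter> B" "\<forall>n. (nablat ^^ n) \<alpha> t1 \<in> E t1"
      using exists_point_funpow_nablat_in_fibre[OF B(1) hol fibres derivs] t0 by blast
    then have "\<alpha> s \<in> E t1"
      using in_subspace_if_funpow_nablat_in_subspace[OF B hol] fibres s by blast
    with t1(1) show "\<exists>t\<in>W \<inter> B. \<alpha> s \<in> E t" by blast
  qed
qed

theorem theorem2:
  fixes B :: "complex set" and c :: complex and r :: real and g :: nat
    and Q :: "int^'n^'n" and E :: "complex \<Rightarrow> (complex^'n) set"
    and \<alpha> :: "complex \<Rightarrow> complex^'n"
  assumes "r > 0" and "B = ball c r"
    and "pvhs_wt1 B g Q E"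
    and "hol_section B E \<alpha>"
  shows "Gamma_U B E \<alpha> \<longleftrightarrow> (\<forall>j<g. Gamma_K B E ((nablat ^^ j) \<alpha>))"
proof -
  have B: "open B" "connected B" using assms(2) by simp_all
  have E: "holo_subbundle B g E" using assms(3) unfolding pvhs_wt1_def by blast
  then have fibres: "\<forall>t\<in>B. vec.subspace (E t)" unfolding holo_subbundle_def by blast
  have hol: "vec_holomorphic B \<alpha>" using assms(4) unfolding hol_section_def by blast
  have "Gamma_U B E \<alpha> \<longleftrightarrow> (\<forall>t\<in>B. \<alpha> t \<in> unitary_flat B E)"
    by (rule Gamma_U_iff[OF fibres hol])
  also have "\<dots> \<longleftrightarrow> (\<forall>n\<le>g. \<forall>t\<in>B. (nablat ^^ n) \<alpha> t \<in> E t)"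
  proof
    assume "\<forall>t\<in>B. \<alpha> t \<in> unitary_flat B E"
    then show "\<forall>n\<le>g. \<forall>t\<in>B. (nablat ^^ n) \<alpha> t \<in> E t"
      using funpow_nablat_in_unitary_flat[OF B(1) hol fibres] by (auto simp: unitary_flat_def)
  qed (use unitary_flat_if_funpow_nablat_in_fibres[OF B E hol] in blast)
  also have "\<dots> \<longleftrightarrow> (\<forall>j<g. Gamma_K B E ((nablat ^^ j) \<alpha>))"
    by (rule Gamma_K_funpow_nablat_iff[OF B(1) fibres assms(4), symmetric])
  finally show ?thesis .
qed

end
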